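(* Let $G_{\lambda,k}$ be a skeleton of a connected graph $G$, and let $G''=G_{(\lambda,k)_{(2,2)}}$. If two sets of vertices are $n$-disjoint in $G''$ for some $n>1$, then their preimages in $G_{\lambda,k}$ (under the natural map $G_{\lambda,k}\to G''$) are $(n+\frac n2)$-disjoint.
   Context: $d$ is the graph metric of the relevant graph. Sets $X,Y$ are $r$-disjoint if $d(a,b)>r$ for all $a\in X,b\in Y$. A set $X$ is $k$-connected if any two of its points are joined by a finite sequence in $X$ with consecutive distances $\le k$. Skeleton $\Gamma_{\lambda,k}$ of a connected graph $\Gamma$ (root $x_0$, scale $\lambda\ge1$, connectivity $k\ge1$): layers $A_{N,\lambda}=\{x: N\lambda<d(x,x_0)\le(N+1)\lambda\}$, $N\in\mathbb Z$; blocks are the maximal $k$-connected subsets of layers (distances in $\Gamma$); $\Gamma_{\lambda,k}$ has a vertex per block and an edge between two blocks iff an edge of $\Gamma$ joins them; the natural map sends each vertex to its block. $G_{(\lambda,k)_{(2,2)}}$ is the skeleton of the graph $G_{\lambda,k}$ with scale $2$ and connectivity $2$, rooted at the block containing the root of $G$. *)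

theory Defs
  imports Complex_Main
begin

definition is_walk :: "('a \<Rightarrow> 'a \<Rightarrow> bool) \<Rightarrow> 'a list \<Rightarrow> bool" where
  "is_walk E xs \<longleftrightarrow> xs \<noteq> [] \<and> (\<forall>i. Suc i < length xs \<longrightarrow> E (xs ! i) (xs ! Suc i))"

definition conn_graph :: "'a set \<Rightarrow> ('a \<Rightarrow> 'a \<Rightarrow> bool) \<Rightarrow> bool" where
  "conn_graph V E \<longleftrightarrow> V \<noteq> {} \<and> (\<forall>x y. E x y \<longrightarrow> x \<in> V \<and> y \<in> V) \<and> (\<forall>x y. E x y \<longrightarrow> E y x)
     \<and> (\<forall>x\<in>V. \<forall>y\<in>V. \<exists>xs. is_walk E xs \<and> hd xs = x \<and> last xs = y)"

definition gdist :: "('a \<Rightarrow> 'a \<Rightarrow> bool) \<Rightarrow> 'a \<Rightarrow> 'a \<Rightarrow> nat" where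
  "gdist E x y = (LEAST n. \<exists>xs. is_walk E xs \<and> hd xs = x \<and> last xs = y \<and> length xs = Suc n)"

definition r_disjoint :: "('a \<Rightarrow> 'a \<Rightarrow> bool) \<Rightarrow> real \<Rightarrow> 'a set \<Rightarrow> 'a set \<Rightarrow> bool" where
  "r_disjoint E r X Y \<longleftrightarrow> (\<forall>a\<in>X. \<forall>b\<in>Y. real (gdist E a b) > r)"

definition k_connected :: "('a \<Rightarrow> 'a \<Rightarrow> bool) \<Rightarrow> real \<Rightarrow> 'a set \<Rightarrow> bool" where
  "k_connected E k X \<longleftrightarrow> (\<forall>x\<in>X. \<forall>y\<in>X. \<exists>xs. xs \<noteq> [] \<and> hd xs = x \<and> last xs = y \<and> set xs \<subseteq> X
      \<and> (\<forall>i. Suc i < length xs \<longrightarrow> real (gdist E (xs ! i) (xs ! Suc i)) \<le> k))"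

definition layer :: "'a set \<Rightarrow> ('a \<Rightarrow> 'a \<Rightarrow> bool) \<Rightarrow> 'a \<Rightarrow> real \<Rightarrow> int \<Rightarrow> 'a set" where
  "layer V E x0 lam N = {x \<in> V. real_of_int N * lam < real (gdist E x x0) \<and> real (gdist E x x0) \<le> (real_of_int N + 1) * lam}"

definition skel_verts :: "'a set \<Rightarrow> ('a \<Rightarrow> 'a \<Rightarrow> bool) \<Rightarrow> 'a \<Rightarrow> real \<Rightarrow> real \<Rightarrow> 'a set set" where
  "skel_verts V E x0 lam k = {B. \<exists>N::int. B \<noteq> {} \<and> B \<subseteq> layer V E x0 lam N \<and> k_connected E k B \<and>
      (\<forall>C. B \<subseteq> C \<and> C \<subseteq> layer V E x0 lam N \<and> k_connected E k C \<longrightarrow> C = B)}"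

definition skel_edges :: "'a set \<Rightarrow> ('a \<Rightarrow> 'a \<Rightarrow> bool) \<Rightarrow> 'a \<Rightarrow> real \<Rightarrow> real \<Rightarrow> 'a set \<Rightarrow> 'a set \<Rightarrow> bool" where
  "skel_edges V E x0 lam k B C \<longleftrightarrow> B \<in> skel_verts V E x0 lam k \<and> C \<in> skel_verts V E x0 lam k \<and> B \<noteq> C
      \<and> (\<exists>x\<in>B. \<exists>y\<in>C. E x y)"

definition skel_root :: "'a set \<Rightarrow> ('a \<Rightarrow> 'a \<Rightarrow> bool) \<Rightarrow> 'a \<Rightarrow> real \<Rightarrow> real \<Rightarrow> 'a set" where
  "skel_root V E x0 lam k = (THE B. B \<in> skel_verts V E x0 lam k \<and> x0 \<in> B)"

definition nat_map :: "'a set \<Rightarrow> ('a \<Rightarrow> 'a \<Rightarrow> bool) \<Rightarrow> 'a \<Rightarrow> real \<Rightarrow> real \<Rightarrow> 'a \<Rightarrow> 'a set" where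
  "nat_map V E x0 lam k x = (THE B. B \<in> skel_verts V E x0 lam k \<and> x \<in> B)"

end

theory Submission
  imports Defs
begin

text \<open>Distance to the root changes by at most one along an edge, so in the skeleton of scale 2
  and connectivity 2 two of any three consecutive vertices of a walk lie in a common layer at
  distance at most 2, hence in a common block. A walk of length \<open>m\<close> in \<open>G\<^sub>\<lambda>\<^sub>,\<^sub>k\<close> therefore
  projects to a walk of length at most \<open>(m + 1) / 2\<close> in \<open>G''\<close>. Finally \<open>n < d'' \<le> (m + 1) / 2\<close>
  forces \<open>m > 2n - 1\<close>, and \<open>m \<ge> 3\<close> because the integer \<open>d''\<close> exceeds 1; together these give
  \<open>m > 3n/2\<close>.\<close>

lemma is_walk_iff_successively: "is_walk E xs \<longleftrightarrow> xs \<noteq> [] \<and> successively E xs"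
  unfolding is_walk_def successively_conv_nth by blast

lemma gdist_le_walk_length:
  assumes "is_walk E xs" shows "gdist E (hd xs) (last xs) \<le> length xs - 1"
proof -
  have "length xs = Suc (length xs - 1)" using assms by (simp add: is_walk_iff_successively)
  then show ?thesis unfolding gdist_def using assms by (blast intro: Least_le)
qed

lemma gdist_shortest_walk:
  assumes "is_walk E xs"
  obtains ws where "is_walk E ws" "hd ws = hd xs" "last ws = last xs"
    "length ws = Suc (gdist E (hd xs) (last xs))"
proof -
  have "length xs = Suc (length xs - 1)" using assms by (simp add: is_walk_iff_successively)
  then have "\<exists>n ws. is_walk E ws \<and> hd ws = hd xs \<and> last ws = last xs \<and> length ws = Suc n"
    using assms by blast
  from LeastI_ex[OF this] show ?thesis using that unfolding gdist_def by blast
qed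

lemma is_walk_rev: assumes "symp E" shows "is_walk E (rev xs) \<longleftrightarrow> is_walk E xs"
proof -
  have "successively (\<lambda>x y. E y x) xs \<longleftrightarrow> successively E xs"
    by (intro iffI; erule successively_mono) (use assms in \<open>auto dest: sympD\<close>)
  then show ?thesis unfolding is_walk_iff_successively successively_rev by simp
qed

lemma gdist_sym: assumes "symp E" shows "gdist E x y = gdist E y x"
proof -
  have reverse: "\<exists>ws. is_walk E ws \<and> hd ws = b \<and> last ws = a \<and> length ws = l"
    if "is_walk E xs" "hd xs = a" "last xs = b" "length xs = l" for xs a b l
    using that is_walk_rev[OF assms, of xs]
    by (intro exI[of _ "rev xs"]) (auto simp: hd_rev last_rev is_walk_iff_successively)
  show ?thesis unfolding gdist_def by (intro arg_cong[where f = Least] ext iffI) (blast intro: reverse)+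
qed

lemma walk_subset:
  assumes "\<forall>x y. E x y \<longrightarrow> x \<in> V \<and> y \<in> V" and "is_walk E xs" and "hd xs \<in> V"
  shows "set xs \<subseteq> V"
proof
  fix v assume "v \<in> set xs"
  then obtain i where i: "i < length xs" "xs ! i = v" by (auto simp: in_set_conv_nth)
  show "v \<in> V"
  proof (cases i)
    case 0
    then show ?thesis using assms(3) i by (simp add: hd_conv_nth)
  next
    case (Suc j)
    then have "E (xs ! j) (xs ! i)" using assms(2) i unfolding is_walk_def by blast
    then show ?thesis using assms(1) i by blast
  qed
qed

lemma gdist_edge_le:
  assumes "conn_graph V E" "r \<in> V" "a \<in> V" "E b a"
  shows "gdist E b r \<le> gdist E a r + 1"
proof -
  obtain xs where "is_walk E xs" "hd xs = a" "last xs = r" using assms unfolding conn_graph_def by blast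
  then obtain ws where ws: "is_walk E ws" "hd ws = a" "last ws = r" "length ws = Suc (gdist E a r)"
    by (metis gdist_shortest_walk)
  then have "is_walk E (b # ws)" using assms(4) by (cases ws) (auto simp: is_walk_iff_successively)
  from gdist_le_walk_length[OF this] show ?thesis using ws by (simp add: is_walk_iff_successively)
qed

text \<open>Walks of the reflexive closure (lazy walks) are the images of walks under maps that may
  merge adjacent vertices.\<close>

lemma lazy_walk_shorten:
  "is_walk (\<lambda>a b. a = b \<or> R a b) xs
    \<Longrightarrow> \<exists>ws. is_walk R ws \<and> hd ws = hd xs \<and> last ws = last xs \<and> length ws \<le> length xs"
proof (induction xs rule: induct_list012)
  case 1
  then show ?case by (simp add: is_walk_iff_successively)
next
  case (2 x)
  then show ?case by (intro exI[of _ "[x]"]) (simp add: is_walk_iff_successively)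
next
  case (3 x y zs)
  then have xy: "x = y \<or> R x y" and "is_walk (\<lambda>a b. a = b \<or> R a b) (y # zs)"
    by (auto simp: is_walk_iff_successively)
  then obtain ws where ws: "is_walk R ws" "hd ws = y" "last ws = last (y # zs)" "length ws \<le> length (y # zs)"
    using "3.IH"(2) by auto
  show ?case
  proof (cases "x = y")
    case True
    then show ?thesis using ws by (intro exI[of _ ws]) auto
  next
    case False
    then have "is_walk R (x # ws)" using ws xy by (cases ws) (auto simp: is_walk_iff_successively)
    then show ?thesis using ws by (intro exI[of _ "x # ws"]) (auto simp: is_walk_iff_successively)
  qed
qed

lemma gdist_le_lazy_walk_length:
  assumes "is_walk (\<lambda>a b. a = b \<or> R a b) xs" shows "gdist R (hd xs) (last xs) \<le> length xs - 1"
  using lazy_walk_shorten[OF assms] gdist_le_walk_length by fastforce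

lemma lazy_walk_image_half_length:
  assumes edge: "\<And>a b. a \<in> V \<Longrightarrow> b \<in> V \<Longrightarrow> E a b \<Longrightarrow> f a = f b \<or> R (f a) (f b)"
    and merge: "\<And>a b c. a \<in> V \<Longrightarrow> b \<in> V \<Longrightarrow> c \<in> V \<Longrightarrow> E a b \<Longrightarrow> E b c
                  \<Longrightarrow> f a = f b \<or> f a = f c \<or> f b = f c"
  shows "is_walk E ws \<Longrightarrow> set ws \<subseteq> V \<Longrightarrow> \<exists>zs. is_walk (\<lambda>a b. a = b \<or> R a b) zs
           \<and> hd zs = f (hd ws) \<and> last zs = f (last ws) \<and> length zs \<le> length ws div 2 + 1"
proof (induction ws rule: induct_list012)
  case 1
  then show ?case by (simp add: is_walk_iff_successively)
next
  case (2 x)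
  then show ?case by (intro exI[of _ "[f x]"]) (simp add: is_walk_iff_successively)
next
  case (3 x y zs)
  have xy: "x \<in> V" "y \<in> V" "E x y" and walk_y: "is_walk E (y # zs)" "set (y # zs) \<subseteq> V"
    using "3.prems" by (auto simp: is_walk_iff_successively)
  show ?case
  proof (cases zs)
    case Nil
    then show ?thesis using edge[OF xy]
      by (intro exI[of _ "[f x, f y]"]) (auto simp: is_walk_iff_successively)
  next
    case (Cons c rest)
    have yc: "c \<in> V" "E y c" and walk_c: "is_walk E zs" "set zs \<subseteq> V"
      using walk_y Cons by (auto simp: is_walk_iff_successively)
    obtain zs' where zs': "is_walk (\<lambda>a b. a = b \<or> R a b) zs'" "hd zs' = f c"
      "last zs' = f (last zs)" "length zs' \<le> length zs div 2 + 1"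
      using "3.IH"(1)[OF walk_c] Cons by auto
    consider "f x = f y" | "f x = f c" | "f y = f c" using merge[OF xy(1,2) yc(1) xy(3) yc(2)] by blast
    then show ?thesis
    proof cases
      case 1
      then show ?thesis using "3.IH"(2)[OF walk_y] by force
    next
      case 2
      then show ?thesis using zs' Cons by (intro exI[of _ zs']) auto
    next
      case 3
      then have "is_walk (\<lambda>a b. a = b \<or> R a b) (f x # zs')"
        using zs' edge[OF xy] by (cases zs') (auto simp: is_walk_iff_successively)
      then show ?thesis using zs' Cons by (intro exI[of _ "f x # zs'"]) (auto simp: is_walk_iff_successively)
    qed
  qed
qed

definition chain_connects :: "('a \<Rightarrow> 'a \<Rightarrow> bool) \<Rightarrow> real \<Rightarrow> 'a set \<Rightarrow> 'a \<Rightarrow> 'a \<Rightarrow> bool" where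
  "chain_connects E k S x y \<longleftrightarrow> (\<exists>xs. xs \<noteq> [] \<and> hd xs = x \<and> last xs = y \<and> set xs \<subseteq> S
      \<and> successively (\<lambda>a b. real (gdist E a b) \<le> k) xs)"

lemma k_connected_iff_chain_connects:
  "k_connected E k X \<longleftrightarrow> (\<forall>x\<in>X. \<forall>y\<in>X. chain_connects E k X x y)"
  unfolding k_connected_def chain_connects_def successively_conv_nth by blast

lemma chain_connects_refl: "x \<in> S \<Longrightarrow> chain_connects E k S x x"
  unfolding chain_connects_def by (intro exI[of _ "[x]"]) simp

lemma chain_connects_mem: "chain_connects E k S x y \<Longrightarrow> y \<in> S"
  unfolding chain_connects_def using last_in_set by blast

lemma chain_connects_mono: "chain_connects E k S x y \<Longrightarrow> S \<subseteq> T \<Longrightarrow> chain_connects E k T x y"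
  unfolding chain_connects_def by blast

lemma chain_connects_sym:
  assumes "symp E" and "chain_connects E k S x y" shows "chain_connects E k S y x"
proof -
  obtain xs where xs: "xs \<noteq> []" "hd xs = x" "last xs = y" "set xs \<subseteq> S"
    "successively (\<lambda>a b. real (gdist E a b) \<le> k) xs"
    using assms(2) unfolding chain_connects_def by blast
  then have "successively (\<lambda>a b. real (gdist E a b) \<le> k) (rev xs)"
    using gdist_sym[OF assms(1)] by (simp add: successively_rev)
  then show ?thesis unfolding chain_connects_def using xs
    by (intro exI[of _ "rev xs"]) (simp add: hd_rev last_rev)
qed

lemma chain_connects_trans:
  assumes "chain_connects E k S x y" and "chain_connects E k S y z" shows "chain_connects E k S x z"
proof -
  obtain xs where xs: "xs \<noteq> []" "hd xs = x" "last xs = y" "set xs \<subseteq> S"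
    "successively (\<lambda>a b. real (gdist E a b) \<le> k) xs"
    using assms(1) unfolding chain_connects_def by blast
  obtain ys where ys: "y # ys \<noteq> []" "last (y # ys) = z" "set (y # ys) \<subseteq> S"
    "successively (\<lambda>a b. real (gdist E a b) \<le> k) (y # ys)"
    using assms(2) unfolding chain_connects_def by (metis list.exhaust_sel)
  have "successively (\<lambda>a b. real (gdist E a b) \<le> k) (xs @ ys)"
    using xs(1,3,5) ys(4) by (auto simp: successively_append_iff successively_Cons)
  then show ?thesis unfolding chain_connects_def using xs ys
    by (intro exI[of _ "xs @ ys"]) (auto split: if_splits)
qed

lemma chain_connects_prefix:
  assumes "xs \<noteq> []" "set xs \<subseteq> S" "successively (\<lambda>a b. real (gdist E a b) \<le> k) xs"
    and "w \<in> set xs"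
  shows "chain_connects E k S (hd xs) w"
proof -
  obtain as bs where split: "xs = as @ w # bs" using assms(4) by (meson split_list)
  then have "successively (\<lambda>a b. real (gdist E a b) \<le> k) ((as @ [w]) @ bs)" using assms(3) by simp
  then have "successively (\<lambda>a b. real (gdist E a b) \<le> k) (as @ [w])"
    by (simp only: successively_append_iff)
  moreover have "hd (as @ [w]) = hd xs" using split by (cases as) auto
  ultimately show ?thesis unfolding chain_connects_def using assms(2) split
    by (intro exI[of _ "as @ [w]"]) auto
qed

lemma mem_layer_ceiling:
  assumes "lam > 0" "x \<in> V" shows "x \<in> layer V E x0 lam (\<lceil>real (gdist E x x0) / lam\<rceil> - 1)"
proof -
  define d where "d = real (gdist E x x0)"
  define c where "c = \<lceil>d / lam\<rceil>"
  have "real_of_int c - 1 < d / lam" "d / lam \<le> real_of_int c" unfolding c_def by linarith+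
  then have "(real_of_int c - 1) * lam < d" "d \<le> real_of_int c * lam"
    using assms(1) by (simp_all add: pos_less_divide_eq pos_divide_le_eq)
  then show ?thesis using assms(2) unfolding layer_def d_def c_def by simp
qed

lemma mem_layer_scale_2:
  assumes "x \<in> V" shows "x \<in> layer V E x0 2 ((int (gdist E x x0) + 1) div 2 - 1)"
proof -
  define N where "N = (int (gdist E x x0) + 1) div 2 - 1"
  have "2 * N < int (gdist E x x0)" "int (gdist E x x0) \<le> 2 * N + 2" unfolding N_def by presburger+
  then have "real_of_int (2 * N) < real_of_int (gdist E x x0)" "real_of_int (gdist E x x0) \<le> real_of_int (2 * N + 2)"
    by (simp_all only: of_int_less_iff of_int_le_iff)
  then show ?thesis using assms unfolding layer_def N_def by simp
qed

lemma layer_unique: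
  assumes "lam > 0" "x \<in> layer V E x0 lam N" "x \<in> layer V E x0 lam M" shows "N = M"
proof -
  have "real_of_int N * lam < real_of_int (M + 1) * lam" "real_of_int M * lam < real_of_int (N + 1) * lam"
    using assms(2,3) unfolding layer_def by auto
  then have "real_of_int N < real_of_int (M + 1)" "real_of_int M < real_of_int (N + 1)"
    using assms(1) mult_less_cancel_right_pos by blast+
  then show ?thesis by linarith
qed

context
  fixes V :: "'a set" and E :: "'a \<Rightarrow> 'a \<Rightarrow> bool" and x0 :: 'a and lam k :: real
  assumes sym: "symp E" and lam_pos: "lam > 0"
begin

text \<open>The blocks are exactly the equivalence classes of \<open>chain_connects\<close> within a layer.\<close>

definition layer_component :: "int \<Rightarrow> 'a \<Rightarrow> 'a set" where
  "layer_component N x = {y. chain_connects E k (layer V E x0 lam N) x y}"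

lemma layer_component_subset: "layer_component N x \<subseteq> layer V E x0 lam N"
  unfolding layer_component_def using chain_connects_mem by fast

lemma self_in_layer_component: "x \<in> layer V E x0 lam N \<Longrightarrow> x \<in> layer_component N x"
  unfolding layer_component_def by (simp add: chain_connects_refl)

lemma layer_component_eqI:
  "chain_connects E k (layer V E x0 lam N) x y \<Longrightarrow> layer_component N x = layer_component N y"
  unfolding layer_component_def
  by (intro Collect_cong iffI) (use chain_connects_sym[OF sym] chain_connects_trans in metis)+

lemma k_connected_layer_component: "k_connected E k (layer_component N x)"
  unfolding k_connected_iff_chain_connects
proof (intro ballI)
  fix y z assume "y \<in> layer_component N x" "z \<in> layer_component N x"
  then have xy: "chain_connects E k (layer V E x0 lam N) x y"
    and xz: "chain_connects E k (layer V E x0 lam N) x z"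
    unfolding layer_component_def by simp_all
  obtain xs where xs: "xs \<noteq> []" "hd xs = y" "last xs = z" "set xs \<subseteq> layer V E x0 lam N"
    "successively (\<lambda>a b. real (gdist E a b) \<le> k) xs"
    using chain_connects_trans[OF chain_connects_sym[OF sym xy] xz] unfolding chain_connects_def by blast
  have "set xs \<subseteq> layer_component N y"
    using chain_connects_prefix[OF xs(1,4,5)] xs(2) unfolding layer_component_def by blast
  then show "chain_connects E k (layer_component N x) y z"
    unfolding chain_connects_def layer_component_eqI[OF xy] using xs by (intro exI[of _ xs]) simp
qed

lemma k_connected_subset_layer_component:
  assumes "B \<subseteq> layer V E x0 lam N" "k_connected E k B" "x \<in> B"
  shows "B \<subseteq> layer_component N x"
proof
  fix b assume "b \<in> B"
  then have "chain_connects E k B x b" using assms(2,3) unfolding k_connected_iff_chain_connects by blast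
  then show "b \<in> layer_component N x"
    unfolding layer_component_def mem_Collect_eq by (rule chain_connects_mono[OF _ assms(1)])
qed

lemma layer_component_in_skel_verts:
  assumes "x \<in> layer V E x0 lam N" shows "layer_component N x \<in> skel_verts V E x0 lam k"
proof -
  have maximal: "C = layer_component N x"
    if "layer_component N x \<subseteq> C" "C \<subseteq> layer V E x0 lam N" "k_connected E k C" for C
  proof -
    have "x \<in> C" using that(1) self_in_layer_component[OF assms] by blast
    then show ?thesis using that(1) k_connected_subset_layer_component[OF that(2,3)] by auto
  qed
  have "layer_component N x \<noteq> {}" using self_in_layer_component[OF assms] by blast
  then show ?thesis unfolding skel_verts_def using layer_component_subset k_connected_layer_component maximal
    by (intro CollectI exI[of _ N]) blast
qed

lemma skel_vert_eq_layer_component: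
  assumes "B \<in> skel_verts V E x0 lam k" "x \<in> B" "x \<in> layer V E x0 lam N"
  shows "B = layer_component N x"
proof -
  obtain M where M: "B \<subseteq> layer V E x0 lam M" "k_connected E k B"
    "\<And>C. B \<subseteq> C \<and> C \<subseteq> layer V E x0 lam M \<and> k_connected E k C \<Longrightarrow> C = B"
    using assms(1) unfolding skel_verts_def by auto
  have "x \<in> layer V E x0 lam M" using M(1) assms(2) by blast
  then have "M = N" using layer_unique[OF lam_pos _ assms(3)] by simp
  then have "B \<subseteq> layer_component N x" "layer_component N x \<subseteq> layer V E x0 lam M"
    using k_connected_subset_layer_component[OF M(1,2) assms(2)] layer_component_subset by simp_all
  then show ?thesis using M(3)[of "layer_component N x"] k_connected_layer_component by simp
qed

lemma nat_map_eq_layer_component: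
  assumes "x \<in> layer V E x0 lam N" shows "nat_map V E x0 lam k x = layer_component N x"
  unfolding nat_map_def
proof (rule the_equality)
  show "layer_component N x \<in> skel_verts V E x0 lam k \<and> x \<in> layer_component N x"
    using layer_component_in_skel_verts[OF assms] self_in_layer_component[OF assms] by simp
qed (use skel_vert_eq_layer_component assms in blast)

lemma nat_map_in_skel_verts:
  assumes "x \<in> V" shows "nat_map V E x0 lam k x \<in> skel_verts V E x0 lam k" "x \<in> nat_map V E x0 lam k x"
proof -
  let ?N = "\<lceil>real (gdist E x x0) / lam\<rceil> - 1"
  have "x \<in> layer V E x0 lam ?N" using mem_layer_ceiling[OF lam_pos assms] .
  then show "nat_map V E x0 lam k x \<in> skel_verts V E x0 lam k" "x \<in> nat_map V E x0 lam k x"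
    using nat_map_eq_layer_component layer_component_in_skel_verts self_in_layer_component by simp_all
qed

lemma skel_verts_subset: "B \<in> skel_verts V E x0 lam k \<Longrightarrow> B \<subseteq> V"
  unfolding skel_verts_def layer_def by auto

lemma nat_map_eqI:
  assumes "B \<in> skel_verts V E x0 lam k" "x \<in> B" shows "nat_map V E x0 lam k x = B"
proof -
  have "x \<in> V" using skel_verts_subset assms by blast
  then have "x \<in> layer V E x0 lam (\<lceil>real (gdist E x x0) / lam\<rceil> - 1)"
    by (rule mem_layer_ceiling[OF lam_pos])
  then show ?thesis using nat_map_eq_layer_component skel_vert_eq_layer_component[OF assms] by simp
qed

lemma nat_map_eq_if_close:
  assumes "x \<in> layer V E x0 lam N" "y \<in> layer V E x0 lam N" "real (gdist E x y) \<le> k"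
  shows "nat_map V E x0 lam k x = nat_map V E x0 lam k y"
proof -
  have "chain_connects E k (layer V E x0 lam N) x y"
    unfolding chain_connects_def using assms by (intro exI[of _ "[x, y]"]) simp
  then show ?thesis using assms nat_map_eq_layer_component layer_component_eqI by simp
qed

lemma nat_map_edge:
  assumes "E x y" "x \<in> V" "y \<in> V"
  shows "nat_map V E x0 lam k x = nat_map V E x0 lam k y
    \<or> skel_edges V E x0 lam k (nat_map V E x0 lam k x) (nat_map V E x0 lam k y)"
  using nat_map_in_skel_verts[OF assms(2)] nat_map_in_skel_verts[OF assms(3)] assms(1)
  unfolding skel_edges_def by auto

end

lemma conn_graph_skeleton:
  assumes "conn_graph V E" and "lam > 0"
  shows "conn_graph (skel_verts V E x0 lam k) (skel_edges V E x0 lam k)"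
proof -
  let ?V = "skel_verts V E x0 lam k" and ?E = "skel_edges V E x0 lam k" and ?f = "nat_map V E x0 lam k"
  have sym: "symp E" and EV: "\<forall>x y. E x y \<longrightarrow> x \<in> V \<and> y \<in> V"
    and "V \<noteq> {}" and walks: "\<forall>x\<in>V. \<forall>y\<in>V. \<exists>xs. is_walk E xs \<and> hd xs = x \<and> last xs = y"
    using assms(1) unfolding conn_graph_def symp_def by auto
  have "\<exists>xs. is_walk ?E xs \<and> hd xs = B \<and> last xs = C" if B: "B \<in> ?V" and C: "C \<in> ?V" for B C
  proof -
    obtain x y where "x \<in> B" "y \<in> C" using B C unfolding skel_verts_def by auto
    then have "x \<in> V" "y \<in> V" using skel_verts_subset[OF sym assms(2)] B C by blast+
    then obtain xs where xs: "is_walk E xs" "hd xs = x" "last xs = y" using walks by blast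
    then have "set xs \<subseteq> V" using walk_subset[OF EV] \<open>x \<in> V\<close> by blast
    have "successively E xs" using xs(1) by (simp add: is_walk_iff_successively)
    then have "successively (\<lambda>a b. ?f a = ?f b \<or> ?E (?f a) (?f b)) xs"
      by (rule successively_mono) (use \<open>set xs \<subseteq> V\<close> nat_map_edge[OF sym assms(2)] in blast)
    then have "successively (\<lambda>a b. a = b \<or> ?E a b) (map ?f xs)"
      by (simp add: successively_map)
    then have "is_walk (\<lambda>a b. a = b \<or> ?E a b) (map ?f xs)"
      using xs(1) by (simp add: is_walk_iff_successively)
    moreover have "hd (map ?f xs) = B" "last (map ?f xs) = C"
      using xs nat_map_eqI[OF sym assms(2) B \<open>x \<in> B\<close>] nat_map_eqI[OF sym assms(2) C \<open>y \<in> C\<close>]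
      by (auto simp: hd_map last_map is_walk_iff_successively)
    ultimately show ?thesis using lazy_walk_shorten by fastforce
  qed
  moreover have "?V \<noteq> {}" using \<open>V \<noteq> {}\<close> nat_map_in_skel_verts(1)[OF sym assms(2)] by blast
  moreover have "\<forall>B C. ?E B C \<longrightarrow> B \<in> ?V \<and> C \<in> ?V" "\<forall>B C. ?E B C \<longrightarrow> ?E C B"
    using sym unfolding skel_edges_def symp_def by blast+
  ultimately show ?thesis unfolding conn_graph_def by blast
qed

context
  fixes V :: "'a set" and E :: "'a \<Rightarrow> 'a \<Rightarrow> bool" and r :: 'a
  assumes conn: "conn_graph V E" and root: "r \<in> V"
begin

lemma nat_map_2_2_merges:
  assumes "a \<in> V" "b \<in> V" "c \<in> V" "E a b" "E b c"
  defines "f \<equiv> nat_map V E r 2 2"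
  shows "f a = f b \<or> f a = f c \<or> f b = f c"
proof -
  have sym: "symp E" using conn unfolding conn_graph_def symp_def by blast
  define \<rho> where "\<rho> x = int (gdist E x r)" for x
  have same: "f x = f y"
    if "x \<in> V" "y \<in> V" "(\<rho> x + 1) div 2 = (\<rho> y + 1) div 2" "gdist E x y \<le> 2" for x y
  proof -
    have "x \<in> layer V E r 2 ((\<rho> y + 1) div 2 - 1)"
      using mem_layer_scale_2[of _ V E r, OF that(1)] that(3) unfolding \<rho>_def by simp
    moreover have "y \<in> layer V E r 2 ((\<rho> y + 1) div 2 - 1)"
      using mem_layer_scale_2[of _ V E r, OF that(2)] unfolding \<rho>_def .
    ultimately show ?thesis
      using nat_map_eq_if_close[OF sym, where lam = 2 and k = 2] that(4) unfolding f_def by simp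
  qed
  have "\<rho> b \<le> \<rho> a + 1" "\<rho> a \<le> \<rho> b + 1" "\<rho> c \<le> \<rho> b + 1" "\<rho> b \<le> \<rho> c + 1"
    using gdist_edge_le[OF conn root] assms(1-5) sympD[OF sym] unfolding \<rho>_def by fastforce+
  then have "(\<rho> a + 1) div 2 = (\<rho> b + 1) div 2 \<or> (\<rho> a + 1) div 2 = (\<rho> c + 1) div 2
      \<or> (\<rho> b + 1) div 2 = (\<rho> c + 1) div 2"
    by presburger
  moreover have "gdist E a b \<le> 2" "gdist E a c \<le> 2" "gdist E b c \<le> 2"
    using gdist_le_walk_length[of E "[a, b]"] gdist_le_walk_length[of E "[a, b, c]"]
      gdist_le_walk_length[of E "[b, c]"] assms(4,5)
    by (simp_all add: is_walk_iff_successively)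
  ultimately show ?thesis using same assms(1-3) by metis
qed

lemma gdist_nat_map_2_2_le:
  assumes "a \<in> V" "b \<in> V"
  defines "f \<equiv> nat_map V E r 2 2" and "E'' \<equiv> skel_edges V E r 2 2"
  shows "2 * gdist E'' (f a) (f b) \<le> gdist E a b + 1"
proof -
  have sym: "symp E" and EV: "\<forall>x y. E x y \<longrightarrow> x \<in> V \<and> y \<in> V"
    using conn unfolding conn_graph_def symp_def by blast+
  have edge: "f x = f y \<or> E'' (f x) (f y)" if "x \<in> V" "y \<in> V" "E x y" for x y
    unfolding f_def E''_def by (rule nat_map_edge[OF sym _ that(3,1,2)]) simp
  obtain xs where "is_walk E xs" "hd xs = a" "last xs = b" using conn assms unfolding conn_graph_def by blast
  then obtain ws where ws: "is_walk E ws" "hd ws = a" "last ws = b" "length ws = Suc (gdist E a b)"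
    by (metis gdist_shortest_walk)
  then have "set ws \<subseteq> V" using walk_subset[OF EV] assms(1) by blast
  then obtain zs where "is_walk (\<lambda>x y. x = y \<or> E'' x y) zs"
    "hd zs = f a" "last zs = f b" "length zs \<le> length ws div 2 + 1"
    using lazy_walk_image_half_length[of V E f E'', OF edge nat_map_2_2_merges[folded f_def] ws(1)] ws(2,3)
    by blast
  then show ?thesis using gdist_le_lazy_walk_length[of E'' zs] ws(4) by fastforce
qed

end

theorem lemma6:
  fixes V :: "'a set" and E :: "'a \<Rightarrow> 'a \<Rightarrow> bool" and x0 :: 'a
    and lam k n :: real and X Y :: "'a set set set"
  assumes "conn_graph V E" and "x0 \<in> V" and "lam \<ge> 1" and "k \<ge> 1"
  defines "V' \<equiv> skel_verts V E x0 lam k"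
      and "E' \<equiv> skel_edges V E x0 lam k"
      and "r' \<equiv> skel_root V E x0 lam k"
  defines "V'' \<equiv> skel_verts V' E' r' 2 2"
      and "E'' \<equiv> skel_edges V' E' r' 2 2"
  assumes "X \<subseteq> V''" and "Y \<subseteq> V''" and "n > 1"
    and "r_disjoint E'' n X Y"
  shows "r_disjoint E' (n + n / 2)
           {B \<in> V'. nat_map V' E' r' 2 2 B \<in> X} {B \<in> V'. nat_map V' E' r' 2 2 B \<in> Y}"
  unfolding r_disjoint_def
proof (intro ballI)
  let ?f = "nat_map V' E' r' 2 2"
  fix a b assume a: "a \<in> {B \<in> V'. ?f B \<in> X}" and b: "b \<in> {B \<in> V'. ?f B \<in> Y}"
  have lam_pos: "lam > 0" and sym: "symp E" using assms(1,3) unfolding conn_graph_def symp_def by auto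
  have conn': "conn_graph V' E'" unfolding V'_def E'_def using conn_graph_skeleton[OF assms(1) lam_pos] .
  have root': "r' \<in> V'"
    using nat_map_in_skel_verts(1)[OF sym lam_pos assms(2)]
    unfolding V'_def r'_def skel_root_def nat_map_def .
  have contract: "2 * gdist E'' (?f a) (?f b) \<le> gdist E' a b + 1"
    unfolding E''_def using gdist_nat_map_2_2_le[OF conn' root'] a b by simp
  have far: "n < gdist E'' (?f a) (?f b)" using assms(13) a b unfolding r_disjoint_def by blast
  then have "1 < gdist E'' (?f a) (?f b)" using \<open>n > 1\<close> by linarith
  then have "3 \<le> gdist E' a b" using contract by linarith
  then show "n + n / 2 < gdist E' a b" using contract far by linarith
qed

end
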